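(* Let $x \in \mathbb{R}^n$ and let $(B_i)_{i \geq 1}$ be a sequence of open balls in $\mathbb{R}^n$ with unbounded radii such that $x \in B_i$ for every $i$. Then $B = \bigcup_{i \geq 1} B_i$ contains an open halfspace $H$ with $x \in \mathrm{bd}(H)$.
   Context: $\mathrm{bd}(X) = \overline{X} \cap \overline{\mathbb{R}^n \setminus X}$ denotes the topological boundary of $X \subseteq \mathbb{R}^n$. An open halfspace is a set of the form $\{y \in \mathbb{R}^n : a\cdot y > b\}$ with $a \neq 0$. *)

theory Defs
  imports "HOL-Analysis.Analysis"
begin

end

theory Submission
  imports Defs
begin

(* A ball of radius r containing x contains a ball of radius r/2 whose boundary sphere passes
   through x.  Membership in such a tangent ball B(x + rho v, rho), v a unit vector, reads
   |y - x|^2 < 2 rho (v . (y - x)).  Along a sequence of balls with radii tending to infinity,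
   the unit directions v have a subsequence converging to some u, and every y with
   u . (y - x) > 0 eventually satisfies that inequality; so the union contains the open
   halfspace u . y > u . x, whose boundary passes through x. *)

lemma ball_contains_tangent_ball:
  fixes x c :: "'a::euclidean_space"
  assumes "x \<in> ball c r"
  shows "\<exists>v. norm v = 1 \<and> ball (x + (r / 2) *\<^sub>R v) (r / 2) \<subseteq> ball c r"
proof -
  obtain v where v: "norm v = 1" and c_eq: "c = x + norm (c - x) *\<^sub>R v"
  proof (cases "c = x")
    case True
    obtain b :: 'a where "b \<in> Basis" using nonempty_Basis by blast
    then show thesis using True that[of b] by simp
  next
    case False
    then show thesis using that[of "sgn (c - x)"] by (simp add: norm_sgn sgn_div_norm)
  qed
  have d_less: "norm (c - x) < r"
    using assms by (simp add: dist_norm norm_minus_commute)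
  have "dist (x + (r / 2) *\<^sub>R v) c = \<bar>r / 2 - norm (c - x)\<bar>"
    by (subst c_eq) (simp add: dist_norm v flip: scaleR_diff_left)
  also have "\<dots> \<le> r / 2"
    using d_less norm_ge_zero[of "c - x"] by arith
  finally show ?thesis
    using v by (auto simp: ball_subset_ball_iff)
qed

lemma mem_tangent_ball_iff:
  fixes x y v :: "'a::real_inner"
  assumes "norm v = 1" and "0 \<le> \<rho>"
  shows "y \<in> ball (x + \<rho> *\<^sub>R v) \<rho> \<longleftrightarrow> (norm (y - x))\<^sup>2 < 2 * \<rho> * (v \<bullet> (y - x))"
proof -
  have "(dist (x + \<rho> *\<^sub>R v) y)\<^sup>2 = (y - x - \<rho> *\<^sub>R v) \<bullet> (y - x - \<rho> *\<^sub>R v)"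
    by (simp add: dist_norm norm_minus_commute algebra_simps flip: power2_norm_eq_inner)
  also have "\<dots> = (y - x) \<bullet> (y - x) - 2 * \<rho> * (v \<bullet> (y - x)) + \<rho>\<^sup>2 * (v \<bullet> v)"
    by (simp add: inner_diff_left inner_diff_right inner_commute algebra_simps power2_eq_square)
  also have "\<dots> = (norm (y - x))\<^sup>2 - 2 * \<rho> * (v \<bullet> (y - x)) + \<rho>\<^sup>2"
    using assms(1) by (simp add: power2_norm_eq_inner flip: norm_eq_1)
  finally have "(dist (x + \<rho> *\<^sub>R v) y)\<^sup>2 < \<rho>\<^sup>2 \<longleftrightarrow>
      (norm (y - x))\<^sup>2 < 2 * \<rho> * (v \<bullet> (y - x))"
    by linarith
  moreover have "dist (x + \<rho> *\<^sub>R v) y < \<rho> \<longleftrightarrow> (dist (x + \<rho> *\<^sub>R v) y)\<^sup>2 < \<rho>\<^sup>2"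
    using assms(2) by (simp flip: not_le)
  ultimately show ?thesis
    by simp
qed

lemma halfspace_subset_Union_tangent_balls:
  fixes x u :: "'a::real_inner" and v :: "nat \<Rightarrow> 'a"
  assumes unit: "\<And>k. norm (v k) = 1"
    and v_lim: "v \<longlonglongrightarrow> u"
    and \<rho>_lim: "filterlim \<rho> at_top sequentially"
  shows "{y. u \<bullet> y > u \<bullet> x} \<subseteq> (\<Union>k. ball (x + \<rho> k *\<^sub>R v k) (\<rho> k))"
proof
  fix y
  assume "y \<in> {y. u \<bullet> y > u \<bullet> x}"
  then have pos: "u \<bullet> (y - x) > 0"
    by (simp add: inner_diff_right)
  have "(\<lambda>k. 2 * (v k \<bullet> (y - x))) \<longlonglongrightarrow> 2 * (u \<bullet> (y - x))"
    by (intro tendsto_intros v_lim)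
  then have "filterlim (\<lambda>k. 2 * (v k \<bullet> (y - x)) * \<rho> k) at_top sequentially"
    by (rule filterlim_tendsto_pos_mult_at_top) (use pos \<rho>_lim in auto)
  then have "\<forall>\<^sub>F k in sequentially. (norm (y - x))\<^sup>2 < 2 * (v k \<bullet> (y - x)) * \<rho> k"
    by (simp add: filterlim_at_top_dense)
  moreover have "\<forall>\<^sub>F k in sequentially. 0 \<le> \<rho> k"
    using \<rho>_lim by (simp add: filterlim_at_top)
  ultimately obtain k where close: "(norm (y - x))\<^sup>2 < 2 * \<rho> k * (v k \<bullet> (y - x))"
    and nonneg: "0 \<le> \<rho> k"
    using eventually_happens'[OF sequentially_bot eventually_conj] by (auto simp: mult_ac)
  then have "y \<in> ball (x + \<rho> k *\<^sub>R v k) (\<rho> k)"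
    using mem_tangent_ball_iff[OF unit nonneg] close by blast
  then show "y \<in> (\<Union>k. ball (x + \<rho> k *\<^sub>R v k) (\<rho> k))"
    by blast
qed

lemma halfspace_subset_Union_balls:
  fixes x :: "'a::euclidean_space" and c :: "nat \<Rightarrow> 'a"
  assumes mem: "\<And>k. x \<in> ball (c k) (r k)"
    and r_lim: "filterlim r at_top sequentially"
  shows "\<exists>u. u \<noteq> 0 \<and> {y. u \<bullet> y > u \<bullet> x} \<subseteq> (\<Union>k. ball (c k) (r k))"
proof -
  have "\<forall>k. \<exists>w. norm w = 1 \<and> ball (x + (r k / 2) *\<^sub>R w) (r k / 2) \<subseteq> ball (c k) (r k)"
    using ball_contains_tangent_ball[OF mem] by blast
  then obtain v where unit: "\<And>k. norm (v k) = 1"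
    and tangent: "\<And>k. ball (x + (r k / 2) *\<^sub>R v k) (r k / 2) \<subseteq> ball (c k) (r k)"
    by metis
  have "\<forall>k. v k \<in> sphere 0 1"
    using unit by simp
  then obtain u \<sigma> where "u \<in> sphere 0 1" and "strict_mono \<sigma>"
    and v_lim: "(v \<circ> \<sigma>) \<longlonglongrightarrow> u"
    using compact_imp_seq_compact[OF compact_sphere] by (metis seq_compactE)
  have "filterlim (\<lambda>k. 1 / 2 * r (\<sigma> k)) at_top sequentially"
    using filterlim_compose[OF r_lim filterlim_subseq[OF \<open>strict_mono \<sigma>\<close>]]
    by (intro filterlim_tendsto_pos_mult_at_top[OF tendsto_const]) simp_all
  then have "{y. u \<bullet> y > u \<bullet> x} \<subseteq>
      (\<Union>k. ball (x + (r (\<sigma> k) / 2) *\<^sub>R v (\<sigma> k)) (r (\<sigma> k) / 2))"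
    using halfspace_subset_Union_tangent_balls[of "v \<circ> \<sigma>"] unit v_lim by (simp add: o_def)
  also have "\<dots> \<subseteq> (\<Union>k. ball (c k) (r k))"
    using tangent by blast
  finally show ?thesis
    using \<open>u \<in> sphere 0 1\<close> by (intro exI[of _ u]) auto
qed

theorem lemma1:
  fixes x :: "real ^ 'n" and c :: "nat \<Rightarrow> real ^ 'n" and r :: "nat \<Rightarrow> real"
  assumes pos: "\<And>i. i \<ge> 1 \<Longrightarrow> r i > 0"
    and unbdd: "\<And>M. \<exists>i\<ge>1. r i > M"
    and mem: "\<And>i. i \<ge> 1 \<Longrightarrow> x \<in> ball (c i) (r i)"
  shows "\<exists>a b. a \<noteq> 0 \<and> {y. a \<bullet> y > b} \<subseteq> (\<Union>i\<in>{1..}. ball (c i) (r i))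
           \<and> x \<in> frontier {y. a \<bullet> y > b}"
proof -
  have "\<forall>k::nat. \<exists>i\<ge>1. r i > real k"
    using unbdd by blast
  then obtain s where s_ge: "\<And>k. s k \<ge> 1" and s_big: "\<And>k. r (s k) > real k"
    by metis
  have "filterlim (\<lambda>k. r (s k)) at_top sequentially"
    using s_big by (intro filterlim_at_top_mono[OF filterlim_real_sequentially])
      (simp add: less_imp_le)
  then obtain u where "u \<noteq> 0"
    and "{y. u \<bullet> y > u \<bullet> x} \<subseteq> (\<Union>k. ball (c (s k)) (r (s k)))"
    using halfspace_subset_Union_balls[of x "\<lambda>k. c (s k)" "\<lambda>k. r (s k)"] mem[OF s_ge]
    by blast
  moreover have "(\<Union>k. ball (c (s k)) (r (s k))) \<subseteq> (\<Union>i\<in>{1..}. ball (c i) (r i))"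
    using s_ge by blast
  moreover have "x \<in> frontier {y. u \<bullet> y > u \<bullet> x}"
    using \<open>u \<noteq> 0\<close> by (simp add: frontier_halfspace_gt)
  ultimately show ?thesis
    by blast
qed

end
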